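(* Let $k\ge2$ and $n\ge3$. Every monomial occurring in $\mathcal{F}_{n,k}(x)$ has exponent at least $r_{n,k}$, and the coefficient of $x^{r_{n,k}}$ equals $\binom{q_{n,k}+r_{n,k}}{q_{n,k}}$. In other words, the lowest-degree term of $\mathcal{F}_{n,k}(x)$ is $\binom{q_{n,k}+r_{n,k}}{r_{n,k}}x^{r_{n,k}}$.
   Context: For $k\ge2$, the polynomials $\mathcal{F}_{n,k}(x)\in\mathbb{Z}[x]$ ($n\in\mathbb{Z}$) are defined by $\mathcal{F}_{1,k}=1$, $\mathcal{F}_{n,k}=0$ for $n=0,-1,\dots,-(k-2)$, and $\mathcal{F}_{n,k}(x)=\sum_{j=1}^{k}x^{k-j}\mathcal{F}_{n-j,k}(x)$ for all $n\in\mathbb{Z}$. This recurrence is used upwards for $n\ge2$, and downwards for $n\le-(k-1)$ as $\mathcal{F}_{n,k}=\mathcal{F}_{n+k,k}-\sum_{j=1}^{k-1}x^j\mathcal{F}_{n+j,k}$. For $n>0$, set $q_{n,k}=\lfloor (n-2)/k\rfloor$ and let $r_{n,k}\in\{0,\dots,k-1\}$ be the residue of $(k-1)(n-1)$ modulo $k$. Then $n-1=k(q_{n,k}+1)-r_{n,k}$. *)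

theory Defs
  imports "HOL-Computational_Algebra.Polynomial"
begin

text \<open>The polynomials F_{n,k}(x) for n \<ge> 0. Since F_{n,k} = 0 for n = 0,-1,...,-(k-2),
  the upward recurrence F_n = \<Sum>_{j=1..k} x^(k-j) F_{n-j} (n \<ge> 2) only involves
  nonzero terms with n - j \<ge> 1; terms with n - j \<le> 0 vanish.\<close>

function fibpoly :: "nat \<Rightarrow> nat \<Rightarrow> int poly" where
  "fibpoly k n = (if n = 0 then 0 else if n = 1 then 1 else
     (\<Sum>j\<in>{1..k}. if j < n then monom 1 (k - j) * fibpoly k (n - j) else 0))"
  by pat_completeness auto
termination by (relation "measure (\<lambda>(k, n). n)") auto

definition q_nk :: "nat \<Rightarrow> nat \<Rightarrow> nat" where
  "q_nk n k = (n - 2) div k"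

definition r_nk :: "nat \<Rightarrow> nat \<Rightarrow> nat" where
  "r_nk n k = ((k - 1) * (n - 1)) mod k"

end

theory Submission
  imports Defs
begin

text \<open>Write n = k(q+1) - r + 1 with 0 \<le> r < k. Passing to coefficients, the recurrence says
  that the coefficient of x^d in F_n is the sum over i < k, i \<le> d, of the coefficients of
  x^(d-i) in F_(n-k+i), and n - k + i = k q - (r - i) + 1 is again of this shape with r - i in
  place of r. Induction on q then shows that no degree below r occurs and that the coefficient
  of x^r is the sum of binom(q-1+(r-i), r-i) over i \<le> r, which is binom(q+r, r) by the
  hockey-stick identity.\<close>

lemma coeff_fibpoly_rec:
  assumes "n \<ge> 2"
  shows "coeff (fibpoly k n) d =
    (\<Sum>i<k. if k - i < n \<and> i \<le> d then coeff (fibpoly k (n + i - k)) (d - i) else 0)"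
proof -
  have "coeff (fibpoly k n) d =
      (\<Sum>j\<in>{1..k}. if j < n \<and> k - j \<le> d then coeff (fibpoly k (n - j)) (d - (k - j)) else 0)"
    using assms by (subst fibpoly.simps) (auto simp: coeff_sum coeff_monom_mult intro!: sum.cong)
  also have "\<dots> = (\<Sum>i<k. if k - i < n \<and> i \<le> d then coeff (fibpoly k (n + i - k)) (d - i) else 0)"
    by (rule sum.reindex_bij_witness[where i = "\<lambda>i. k - i" and j = "\<lambda>j. k - j"])
      (auto simp: Suc_diff_le)
  finally show ?thesis .
qed

lemma coeff_fibpoly_low_degree:
  assumes "r < k" "n = k * (q + 1) - r + 1" "d \<le> r"
  shows "coeff (fibpoly k n) d = (if d = r then int ((q + r) choose r) else 0)"
  using assms
proof (induction q arbitrary: n r d)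
  case 0
  have "coeff (fibpoly k n) d =
      (\<Sum>i<k. if k - i < n \<and> i \<le> d then coeff (fibpoly k (n + i - k)) (d - i) else 0)"
    using 0 by (intro coeff_fibpoly_rec) simp
  also have "\<dots> = (\<Sum>i<k. if i = r \<and> d = r then 1 else 0)"
    using 0 by (intro sum.cong) auto
  also have "\<dots> = (if d = r then 1 else 0)"
    using \<open>r < k\<close> by (simp add: sum.delta)
  finally show ?case by simp
next
  case (Suc q)
  have "coeff (fibpoly k n) d =
      (\<Sum>i<k. if k - i < n \<and> i \<le> d then coeff (fibpoly k (n + i - k)) (d - i) else 0)"
    using Suc.prems by (intro coeff_fibpoly_rec) simp
  also have "\<dots> = (\<Sum>i<k. if i \<le> r \<and> d = r then int ((q + (r - i)) choose (r - i)) else 0)"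
  proof (intro sum.cong refl)
    fix i assume "i \<in> {..<k}"
    show "(if k - i < n \<and> i \<le> d then coeff (fibpoly k (n + i - k)) (d - i) else 0) =
      (if i \<le> r \<and> d = r then int ((q + (r - i)) choose (r - i)) else 0)"
    proof (cases "i \<le> d")
      case True
      have "n + i - k = k * (q + 1) - (r - i) + 1"
        using Suc.prems True by (simp add: algebra_simps)
      then have "coeff (fibpoly k (n + i - k)) (d - i) =
          (if d - i = r - i then int ((q + (r - i)) choose (r - i)) else 0)"
        using Suc.IH[of "r - i"] Suc.prems True by simp
      moreover have "k - i < n" using Suc.prems by simp
      ultimately show ?thesis using Suc.prems True by auto
    qed (use Suc.prems in auto)
  qed
  also have "\<dots> = (if d = r then int (\<Sum>i\<le>r. (q + r - i) choose (r - i)) else 0)"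
    using Suc.prems by (auto intro!: sum.mono_neutral_cong_right split: if_splits)
  also have "\<dots> = (if d = r then int ((Suc q + r) choose r) else 0)"
    by (simp add: sum_choose_diagonal)
  finally show ?case .
qed

lemma q_nk_r_nk_decomposition:
  assumes "k \<ge> 1" "n \<ge> 2"
  shows "r_nk n k < k" "n = k * (q_nk n k + 1) - r_nk n k + 1"
proof -
  define q s where "q = q_nk n k" and "s = (n - 2) mod k"
  have "s < k" using assms unfolding s_def by simp
  then obtain u where u: "k = Suc (s + u)" using less_imp_Suc_add by blast
  have n: "n - 1 = k * q + s + 1"
    using assms unfolding q_def q_nk_def s_def by simp
  have "(k - 1) * (n - 1) = k * ((k - 1) * q + s) + (k - 1 - s)"
    unfolding n u by (simp add: algebra_simps)
  then have r: "r_nk n k = k - 1 - s"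
    unfolding r_nk_def using assms by simp
  then show "r_nk n k < k" using assms by simp
  show "n = k * (q_nk n k + 1) - r_nk n k + 1"
    using n r \<open>s < k\<close> unfolding q_def by (simp add: algebra_simps)
qed

theorem mainTheorem3:
  fixes n k :: nat
  assumes "k \<ge> 2" and "n \<ge> 3"
  shows "(\<forall>i < r_nk n k. coeff (fibpoly k n) i = 0) \<and>
         coeff (fibpoly k n) (r_nk n k) = int ((q_nk n k + r_nk n k) choose (q_nk n k))"
proof -
  have "r_nk n k < k" "n = k * (q_nk n k + 1) - r_nk n k + 1"
    using q_nk_r_nk_decomposition assms by simp_all
  from coeff_fibpoly_low_degree[OF this] show ?thesis
    using binomial_symmetric[of "r_nk n k" "q_nk n k + r_nk n k"] by simp
qed

end
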